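(* Let $G=G_1\times\dots\times G_n$ be a finite group, where the subgroups $G_1,\ldots,G_n$ have pairwise coprime orders. For $\ell\in\mathbb{N}$, the group $G$ is $\ell$-tuple regular if and only if each of $G_1,\ldots,G_n$ is $\ell$-tuple regular.
   Context: For $\ell\in\mathbb{N}$, a finite group $G$ is $\ell$-tuple regular if for all tuples $(g_1,\ldots,g_\ell),(h_1,\ldots,h_\ell)\in G^\ell$ (entries may repeat) for which $g_i\mapsto h_i$ defines an isomorphism $\langle g_1,\ldots,g_\ell\rangle\to\langle h_1,\ldots,h_\ell\rangle$, there exists a bijection $\Psi\colon G\to G$ such that for every $g\in G$ the assignment $g_1\mapsto h_1,\ldots,g_\ell\mapsto h_\ell,g\mapsto\Psi(g)$ defines an isomorphism $\langle g_1,\ldots,g_\ell,g\rangle\to\langle h_1,\ldots,h_\ell,\Psi(g)\rangle$. *)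

theory Defs
  imports "HOL-Algebra.Algebra"
begin

definition defines_iso :: "('a, 'b) monoid_scheme \<Rightarrow> 'a list \<Rightarrow> 'a list \<Rightarrow> bool" where
  "defines_iso G xs ys \<longleftrightarrow> length xs = length ys \<and>
     (\<exists>\<phi>. \<phi> \<in> iso (subgroup_generated G (set xs)) (subgroup_generated G (set ys)) \<and>
          (\<forall>i < length xs. \<phi> (xs ! i) = ys ! i))"

definition tuple_regular :: "('a, 'b) monoid_scheme \<Rightarrow> nat \<Rightarrow> bool" where
  "tuple_regular G l \<longleftrightarrow>
     (\<forall>xs ys. length xs = l \<and> length ys = l \<and> set xs \<subseteq> carrier G \<and> set ys \<subseteq> carrier G \<and>
        defines_iso G xs ys \<longrightarrow>
        (\<exists>\<Psi>. bij_betw \<Psi> (carrier G) (carrier G) \<and>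
             (\<forall>g \<in> carrier G. defines_iso G (xs @ [g]) (ys @ [\<Psi> g]))))"

definition internal_direct_product :: "('a, 'b) monoid_scheme \<Rightarrow> nat \<Rightarrow> (nat \<Rightarrow> 'a set) \<Rightarrow> bool" where
  "internal_direct_product G n Gs \<longleftrightarrow>
     (\<forall>i < n. subgroup (Gs i) G) \<and>
     (\<lambda>x. foldr (\<lambda>i acc. x i \<otimes>\<^bsub>G\<^esub> acc) [0..<n] \<one>\<^bsub>G\<^esub>)
        \<in> iso (product_group {..<n} (\<lambda>i. G\<lparr>carrier := Gs i\<rparr>)) G"

end

theory Submission
  imports Defs "HOL-Number_Theory.Cong"
begin

text \<open>
  By the Chinese remainder theorem there is, for each i, an exponent e with e = 1 modulo |G_i| and
  e = 0 modulo |G_j| for j \<noteq> i, so the projection of G onto G_i is the power map g \<mapsto> g^e.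
  Isomorphisms between subgroups commute with power maps; hence a tuple-defined isomorphism of G
  projects to tuple-defined isomorphisms of all factors, and conversely such isomorphisms of the
  factors glue componentwise to one of G. Consequently an extending bijection for G maps each G_i
  to itself (an element fixed by the i-th power map has a partner fixed by it as well), and
  extending bijections for the factors assemble componentwise to one for G.
\<close>

lemma (in group) pow_cong_card_subgroup:
  assumes H: "subgroup H G" "finite H" and a: "a \<in> H" and km: "[k = m] (mod card H)"
  shows "a [^] k = a [^] m"
proof -
  interpret H: group "G\<lparr>carrier := H\<rparr>" using H(1) by (rule subgroup_imp_group)
  have a_carrier: "a \<in> carrier G" using H(1) a by (rule subgroup.mem_carrier)
  have "a [^]\<^bsub>G\<lparr>carrier := H\<rparr>\<^esub> card H = \<one>"
    using H.pow_order_eq_1[of a] a by (simp add: order_def)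
  then have order: "a [^] card H = \<one>" by (metis nat_pow_consistent)
  have reduce: "a [^] r = a [^] (r mod card H)" for r :: nat
  proof -
    have "a [^] r = (a [^] card H) [^] (r div card H) \<otimes> a [^] (r mod card H)"
      using a_carrier by (simp add: nat_pow_pow nat_pow_mult)
    also have "\<dots> = a [^] (r mod card H)" using a_carrier order by simp
    finally show ?thesis .
  qed
  show ?thesis using km reduce[of k] reduce[of m] by (simp add: cong_def)
qed

lemma (in monoid) foldr_mult_single:
  assumes "distinct js" "\<And>j. j \<in> set js \<Longrightarrow> j \<noteq> i \<Longrightarrow> x j = \<one>" "x i \<in> carrier G"
  shows "foldr (\<lambda>j acc. x j \<otimes> acc) js \<one> = (if i \<in> set js then x i else \<one>)"
  using assms(1,2)
proof (induction js)
  case (Cons j js)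
  then show ?case using assms(3) by (cases "j = i") auto
qed simp

lemma (in group) subgroup_generated_eq_carrier_update:
  "S \<subseteq> carrier G \<Longrightarrow> subgroup_generated G S = G\<lparr>carrier := generate G S\<rparr>"
  by (simp add: subgroup_generated_def Int_absorb1)

lemma (in group) subgroup_generated_in_subgroup:
  assumes "subgroup H G" "S \<subseteq> H"
  shows "subgroup_generated (G\<lparr>carrier := H\<rparr>) S = subgroup_generated G S"
  using assms generate_consistent[OF assms(2,1)] subgroup_generated_eq_carrier_update[of S]
  by (auto simp: subgroup_generated_def Int_absorb1 dest: subgroup.subset)

lemma (in group) subgroup_generated_subgroup_generated:
  assumes "T \<subseteq> carrier (subgroup_generated G S)"
  shows "subgroup_generated (subgroup_generated G S) T = subgroup_generated G T"
proof -
  have "subgroup (carrier (subgroup_generated G S)) G" by (rule subgroup_subgroup_generated)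
  then show ?thesis
    using subgroup_generated_in_subgroup[OF _ assms] by (simp add: subgroup_generated_def)
qed

lemma defines_isoI:
  assumes "\<phi> \<in> iso (subgroup_generated G (set xs)) (subgroup_generated G (set ys))" "map \<phi> xs = ys"
  shows "defines_iso G xs ys"
  using assms unfolding defines_iso_def by (metis length_map nth_map)

lemma (in group) defines_iso_by_injective_hom:
  assumes xs: "set xs \<subseteq> carrier G" and len: "length xs = length ys"
    and hom: "\<psi> \<in> hom (subgroup_generated G (set xs)) G"
    and inj: "inj_on \<psi> (generate G (set xs))"
    and gen: "map \<psi> xs = ys"
  shows "defines_iso G xs ys"
proof -
  let ?X = "subgroup_generated G (set xs)"
  interpret \<psi>: group_hom ?X G \<psi>
    using hom by (simp add: group_hom_def group_hom_axioms_def)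
  have "carrier (subgroup_generated G (set ys)) = \<psi> ` carrier ?X"
    using \<psi>.subgroup_generated_by_image subgroup_generated_subset_carrier_subset[OF xs] gen
    by (metis subgroup_generated2 set_map)
  then have "\<psi> \<in> iso ?X (subgroup_generated G (set ys))"
    using hom inj by (simp add: iso_def bij_betw_def hom_into_subgroup_eq_gen Int_absorb1 xs
        carrier_subgroup_generated)
  then show ?thesis using gen by (rule defines_isoI)
qed

lemma (in group) defines_isoE:
  assumes "defines_iso G xs ys"
  obtains \<phi> where "\<phi> \<in> iso (subgroup_generated G (set xs)) (subgroup_generated G (set ys))"
    and "group_hom (subgroup_generated G (set xs)) (subgroup_generated G (set ys)) \<phi>"
    and "map \<phi> xs = ys"
proof -
  obtain \<phi> where len: "length xs = length ys"
    and iso: "\<phi> \<in> iso (subgroup_generated G (set xs)) (subgroup_generated G (set ys))"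
    and nth: "\<forall>i < length xs. \<phi> (xs ! i) = ys ! i"
    using assms unfolding defines_iso_def by blast
  have "map \<phi> xs = ys" using len nth by (simp add: list_eq_iff_nth_eq)
  moreover have "group_hom (subgroup_generated G (set xs)) (subgroup_generated G (set ys)) \<phi>"
    using iso by (simp add: group_hom_def group_hom_axioms_def iso_def)
  ultimately show thesis using that iso by blast
qed

lemma (in group) defines_iso_map_pow:
  assumes xs: "set xs \<subseteq> carrier G" and ys: "set ys \<subseteq> carrier G" and D: "defines_iso G xs ys"
  shows "defines_iso G (map (\<lambda>x. x [^] (e::nat)) xs) (map (\<lambda>x. x [^] e) ys)"
proof -
  let ?X = "subgroup_generated G (set xs)" and ?Y = "subgroup_generated G (set ys)"
  let ?xs = "map (\<lambda>x. x [^] e) xs" and ?ys = "map (\<lambda>x. x [^] e) ys"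
  obtain \<phi> where iso: "\<phi> \<in> iso ?X ?Y" and \<phi>: "group_hom ?X ?Y \<phi>" and map: "map \<phi> xs = ys"
    using D by (rule defines_isoE)
  have pow_closed: "set (map (\<lambda>x. x [^] e) zs) \<subseteq> carrier (subgroup_generated G (set zs))"
    if "set zs \<subseteq> carrier G" for zs
    using monoid.nat_pow_closed[OF group.is_monoid[OF group_subgroup_generated]]
      subgroup_generated_subset_carrier_subset[OF that]
    by (fastforce simp: pow_subgroup_generated)
  have "\<phi> (x [^] e) = \<phi> x [^] e" if "x \<in> set xs" for x
    using group_hom.hom_nat_pow[OF \<phi>, of x e] subgroup_generated_subset_carrier_subset[OF xs] that
    by (auto simp: pow_subgroup_generated)
  then have pow_map: "map \<phi> ?xs = ?ys"
    using map by auto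
  then have "\<phi> \<in> iso (subgroup_generated ?X (set ?xs)) (subgroup_generated ?Y (set ?ys))"
    using group_hom.iso_between_subgroups[OF \<phi> iso pow_closed[OF xs]] by (metis set_map)
  then have "\<phi> \<in> iso (subgroup_generated G (set ?xs)) (subgroup_generated G (set ?ys))"
    by (simp only: subgroup_generated_subgroup_generated[OF pow_closed[OF xs]]
        subgroup_generated_subgroup_generated[OF pow_closed[OF ys]])
  then show ?thesis using pow_map by (rule defines_isoI)
qed

lemma (in group) defines_iso_nth_pow_fixed:
  assumes xs: "set xs \<subseteq> carrier G" and D: "defines_iso G xs ys"
    and k: "k < length xs" and fixed: "xs ! k [^] (e::nat) = xs ! k"
  shows "ys ! k [^] e = ys ! k"
proof -
  obtain \<phi> where \<phi>: "group_hom (subgroup_generated G (set xs)) (subgroup_generated G (set ys)) \<phi>"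
    and map: "map \<phi> xs = ys"
    using D by (rule defines_isoE)
  have "xs ! k \<in> carrier (subgroup_generated G (set xs))"
    using subgroup_generated_subset_carrier_subset[OF xs] k by auto
  then have "\<phi> (xs ! k [^] e) = \<phi> (xs ! k) [^] e"
    using group_hom.hom_nat_pow[OF \<phi>] by (simp add: pow_subgroup_generated)
  then show ?thesis using fixed map k by auto
qed

lemma (in group) defines_iso_in_subgroup:
  "subgroup H G \<Longrightarrow> set xs \<subseteq> H \<Longrightarrow> set ys \<subseteq> H \<Longrightarrow>
    defines_iso (G\<lparr>carrier := H\<rparr>) xs ys \<longleftrightarrow> defines_iso G xs ys"
  by (simp add: defines_iso_def subgroup_generated_in_subgroup)

lemma (in group) tuple_regular_subgroup_iff:
  assumes H: "subgroup H G"
  shows "tuple_regular (G\<lparr>carrier := H\<rparr>) l \<longleftrightarrow>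
    (\<forall>xs ys. length xs = l \<and> length ys = l \<and> set xs \<subseteq> H \<and> set ys \<subseteq> H \<and> defines_iso G xs ys \<longrightarrow>
      (\<exists>\<Psi>. bij_betw \<Psi> H H \<and> (\<forall>g \<in> H. defines_iso G (xs @ [g]) (ys @ [\<Psi> g]))))"
proof -
  have extension_iff:
    "(\<forall>g \<in> H. defines_iso (G\<lparr>carrier := H\<rparr>) (xs @ [g]) (ys @ [\<Psi> g])) \<longleftrightarrow>
     (\<forall>g \<in> H. defines_iso G (xs @ [g]) (ys @ [\<Psi> g]))"
    if "set xs \<subseteq> H" "set ys \<subseteq> H" "bij_betw \<Psi> H H" for xs ys \<Psi>
    using that defines_iso_in_subgroup[OF H, of "xs @ [_]" "ys @ [_]"] bij_betw_apply[OF that(3)]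
    by auto
  show ?thesis
    unfolding tuple_regular_def using defines_iso_in_subgroup[OF H] extension_iff
    by (simp cong: conj_cong)
qed

locale direct_decomposition = group G for G (structure) +
  fixes n :: nat and Gs :: "nat \<Rightarrow> 'a set"
  assumes decomposition: "internal_direct_product G n Gs"
begin

abbreviation factors :: "(nat \<Rightarrow> 'a) monoid" where
  "factors \<equiv> product_group {..<n} (\<lambda>i. G\<lparr>carrier := Gs i\<rparr>)"

definition assemble :: "(nat \<Rightarrow> 'a) \<Rightarrow> 'a" where
  "assemble x = foldr (\<lambda>i acc. x i \<otimes> acc) [0..<n] \<one>"

definition component :: "nat \<Rightarrow> 'a \<Rightarrow> 'a" where
  "component i g = inv_into (carrier factors) assemble g i"

lemma subgroup_factor: "i < n \<Longrightarrow> subgroup (Gs i) G"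
  using decomposition unfolding internal_direct_product_def by auto

lemma assemble_iso: "assemble \<in> iso factors G"
  using decomposition unfolding internal_direct_product_def assemble_def by auto

lemma assemble_restrict: "assemble (restrict x {..<n}) = assemble x"
  unfolding assemble_def by (rule foldr_cong) auto

lemma assemble_closed:
  assumes "\<And>i. i < n \<Longrightarrow> x i \<in> Gs i"
  shows "assemble x \<in> carrier G"
proof -
  have "assemble \<in> carrier factors \<rightarrow> carrier G"
    using assemble_iso unfolding iso_def hom_def by blast
  moreover have "restrict x {..<n} \<in> carrier factors"
    using assms by simp
  ultimately have "assemble (restrict x {..<n}) \<in> carrier G" by (rule funcset_mem)
  then show ?thesis by (simp add: assemble_restrict)
qed

lemma component_assemble:
  assumes x: "\<And>i. i < n \<Longrightarrow> x i \<in> Gs i" and i: "i < n"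
  shows "component i (assemble x) = x i"
proof -
  have "inj_on assemble (carrier factors)"
    using assemble_iso by (simp add: iso_def bij_betw_def)
  then have "component i (assemble (restrict x {..<n})) = restrict x {..<n} i"
    unfolding component_def using x by (simp add: inv_into_f_f)
  then show ?thesis using i by (simp add: assemble_restrict)
qed

lemma assemble_components:
  assumes g: "g \<in> carrier G"
  shows "(\<lambda>i. component i g) \<in> carrier factors"
    and "assemble (\<lambda>i. component i g) = g"
proof -
  have bij: "bij_betw assemble (carrier factors) (carrier G)"
    using assemble_iso by (simp add: iso_def)
  then have "inv_into (carrier factors) assemble g \<in> carrier factors"
    using g by (metis bij_betw_def inv_into_into)
  moreover have "(\<lambda>i. component i g) = inv_into (carrier factors) assemble g"
    unfolding component_def ..
  ultimately show "(\<lambda>i. component i g) \<in> carrier factors"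
    by simp
  have "assemble (inv_into (carrier factors) assemble g) = g"
    using bij g by (metis bij_betw_def f_inv_into_f)
  then show "assemble (\<lambda>i. component i g) = g"
    unfolding component_def by (simp add: eta_contract_eq)
qed

lemma component_in_factor: "i < n \<Longrightarrow> g \<in> carrier G \<Longrightarrow> component i g \<in> Gs i"
  using assemble_components(1)[of g] by auto

lemma component_closed: "i < n \<Longrightarrow> g \<in> carrier G \<Longrightarrow> component i g \<in> carrier G"
  using component_in_factor subgroup.mem_carrier[OF subgroup_factor] by blast

lemma components_eqI:
  assumes "g \<in> carrier G" "h \<in> carrier G" "\<And>i. i < n \<Longrightarrow> component i g = component i h"
  shows "g = h"
proof -
  have "assemble (\<lambda>i. component i g) = assemble (\<lambda>i. component i h)"
    using assms(3) by (metis (no_types, lifting) assemble_restrict restrict_ext lessThan_iff)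
  then show ?thesis using assemble_components(2) assms(1,2) by metis
qed

lemma component_mult:
  assumes i: "i < n" and g: "g \<in> carrier G" and h: "h \<in> carrier G"
  shows "component i (g \<otimes> h) = component i g \<otimes> component i h"
proof -
  have "assemble (\<lambda>i\<in>{..<n}. component i g \<otimes> component i h)
      = assemble (\<lambda>i. component i g) \<otimes> assemble (\<lambda>i. component i h)"
    using hom_mult[OF iso_imp_homomorphism[OF assemble_iso]]
      assemble_components(1)[OF g] assemble_components(1)[OF h]
    by simp
  also have "\<dots> = g \<otimes> h"
    by (simp add: assemble_components(2) g h)
  finally have "component i (g \<otimes> h)
      = component i (assemble (\<lambda>j. component j g \<otimes> component j h))"
    by (simp add: assemble_restrict)
  also have "\<dots> = component i g \<otimes> component i h"
    using component_assemble component_in_factor subgroup.m_closed[OF subgroup_factor] g h i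
    by simp
  finally show ?thesis .
qed

lemma component_hom: "i < n \<Longrightarrow> group_hom G G (component i)"
  using component_mult component_closed by unfold_locales (auto simp: hom_def)

lemma component_factor:
  assumes i: "i < n" and j: "j < n" and a: "a \<in> Gs i"
  shows "component j a = (if j = i then a else \<one>)"
proof -
  have "assemble (\<lambda>j. if j = i then a else \<one>) = a"
    unfolding assemble_def using foldr_mult_single[of "[0..<n]" i] i a subgroup.mem_carrier[OF subgroup_factor]
    by simp
  then show ?thesis
    using component_assemble[of "\<lambda>j. if j = i then a else \<one>" j] i j a subgroup.one_closed[OF subgroup_factor]
    by auto
qed

lemma component_generate:
  "i < n \<Longrightarrow> S \<subseteq> carrier G \<Longrightarrow> component i ` generate G S = generate G (component i ` S)"
  using group_hom.generate_img[OF component_hom] by simp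

lemma component_image:
  assumes i: "i < n"
  shows "component i ` carrier G = Gs i"
proof
  show "component i ` carrier G \<subseteq> Gs i" using component_in_factor[OF i] by blast
  show "Gs i \<subseteq> component i ` carrier G"
  proof
    fix a assume a: "a \<in> Gs i"
    then have "component i a = a" using component_factor[OF i i] by simp
    moreover have "a \<in> carrier G" using subgroup.mem_carrier[OF subgroup_factor[OF i] a] .
    ultimately show "a \<in> component i ` carrier G" by (metis imageI)
  qed
qed

definition componentwise :: "(nat \<Rightarrow> 'a \<Rightarrow> 'a) \<Rightarrow> 'a \<Rightarrow> 'a" where
  "componentwise f g = assemble (\<lambda>i. f i (component i g))"

lemma componentwise_closed:
  "(\<And>i. i < n \<Longrightarrow> f i (component i g) \<in> Gs i) \<Longrightarrow> componentwise f g \<in> carrier G"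
  unfolding componentwise_def by (rule assemble_closed)

lemma component_componentwise:
  "(\<And>i. i < n \<Longrightarrow> f i (component i g) \<in> Gs i) \<Longrightarrow> i < n \<Longrightarrow>
    component i (componentwise f g) = f i (component i g)"
  unfolding componentwise_def by (rule component_assemble)

lemma inj_on_componentwise:
  assumes A: "A \<subseteq> carrier G"
    and inj: "\<And>i. i < n \<Longrightarrow> inj_on (f i) (component i ` A)"
    and into: "\<And>i. i < n \<Longrightarrow> f i ` component i ` A \<subseteq> Gs i"
  shows "inj_on (componentwise f) A"
proof (rule inj_onI)
  fix g h
  assume g: "g \<in> A" and h: "h \<in> A" and eq: "componentwise f g = componentwise f h"
  have "component i g = component i h" if i: "i < n" for i
  proof -
    have into_g: "\<And>j. j < n \<Longrightarrow> f j (component j g) \<in> Gs j" and into_h: "\<And>j. j < n \<Longrightarrow> f j (component j h) \<in> Gs j"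
      using into g h by blast+
    have "f i (component i g) = f i (component i h)"
      using eq component_componentwise[of f g, OF into_g i] component_componentwise[of f h, OF into_h i]
      by simp
    then show ?thesis using inj_onD[OF inj[OF i]] g h by blast
  qed
  then show "g = h" using g h A components_eqI by blast
qed

lemma hom_componentwise:
  assumes S: "S \<subseteq> carrier G"
    and hom: "\<And>i. i < n \<Longrightarrow> f i \<in> hom (subgroup_generated G (component i ` S)) G"
    and into: "\<And>i. i < n \<Longrightarrow> f i ` component i ` generate G S \<subseteq> Gs i"
  shows "componentwise f \<in> hom (subgroup_generated G S) G"
proof -
  have carrier_S: "carrier (subgroup_generated G S) = generate G S"
    using S by (simp add: subgroup_generated_eq_carrier_update)
  have gen_carrier: "generate G S \<subseteq> carrier G" using S by (rule generate_incl)
  have into': "f i (component i g) \<in> Gs i" if "i < n" "g \<in> generate G S" for i g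
    using into that by blast
  have carrier_i: "carrier (subgroup_generated G (component i ` S)) = component i ` generate G S"
    if "i < n" for i
    using S component_closed[OF that] component_generate[OF that S]
    by (subst subgroup_generated_eq_carrier_update) auto
  show ?thesis
  proof (rule homI)
    fix g h
    assume "g \<in> carrier (subgroup_generated G S)" "h \<in> carrier (subgroup_generated G S)"
    then have gh: "g \<in> generate G S" "h \<in> generate G S" "g \<otimes> h \<in> generate G S"
      using carrier_S generate.eng by auto
    have closed: "componentwise f k \<in> carrier G" if "k \<in> generate G S" for k
      using into' that by (intro componentwise_closed) blast
    have "component i (componentwise f (g \<otimes> h)) = component i (componentwise f g \<otimes> componentwise f h)"
      if i: "i < n" for i
    proof -
      have in_i: "component i g \<in> carrier (subgroup_generated G (component i ` S))"
        "component i h \<in> carrier (subgroup_generated G (component i ` S))"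
        using gh carrier_i[OF i] by blast+
      have "component i (componentwise f (g \<otimes> h)) = f i (component i g \<otimes> component i h)"
        using component_componentwise[of f, OF into'[OF _ gh(3)] i] component_mult[OF i] gh gen_carrier
        by (simp add: subset_iff)
      also have "\<dots> = f i (component i g) \<otimes> f i (component i h)"
        using hom_mult[OF hom[OF i] in_i] by simp
      also have "\<dots> = component i (componentwise f g \<otimes> componentwise f h)"
        using component_componentwise[of f, OF into'[OF _ gh(1)] i]
          component_componentwise[of f, OF into'[OF _ gh(2)] i]
          component_mult[OF i closed[OF gh(1)] closed[OF gh(2)]]
        by simp
      finally show ?thesis .
    qed
    then show "componentwise f (g \<otimes>\<^bsub>subgroup_generated G S\<^esub> h) = componentwise f g \<otimes> componentwise f h"
      using closed gh by (simp add: components_eqI)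
  qed (use componentwise_closed[of f, OF into'] carrier_S in blast)
qed

lemma map_componentwise:
  assumes len: "length xs = length ys" and ys: "set ys \<subseteq> carrier G"
    and into: "\<And>i. i < n \<Longrightarrow> f i ` component i ` set xs \<subseteq> Gs i"
    and maps: "\<And>i. i < n \<Longrightarrow> map (f i) (map (component i) xs) = map (component i) ys"
  shows "map (componentwise f) xs = ys"
proof (rule nth_equalityI)
  fix k assume k: "k < length (map (componentwise f) xs)"
  then have into_k: "\<And>i. i < n \<Longrightarrow> f i (component i (xs ! k)) \<in> Gs i"
    using into by (metis image_subset_iff length_map nth_mem imageI)
  have "component i (componentwise f (xs ! k)) = component i (ys ! k)" if i: "i < n" for i
    using component_componentwise[of f, OF into_k i] maps[OF i] k len
    by (metis length_map nth_map)
  moreover have "componentwise f (xs ! k) \<in> carrier G" using into_k by (rule componentwise_closed)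
  moreover have "ys ! k \<in> carrier G" using ys k len nth_mem by fastforce
  ultimately show "map (componentwise f) xs ! k = ys ! k"
    using k by (simp add: components_eqI)
qed (simp add: len)

lemma defines_iso_of_components:
  assumes xs: "set xs \<subseteq> carrier G" and ys: "set ys \<subseteq> carrier G" and len: "length xs = length ys"
    and comps: "\<And>i. i < n \<Longrightarrow> defines_iso G (map (component i) xs) (map (component i) ys)"
  shows "defines_iso G xs ys"
proof -
  let ?X = "\<lambda>i. subgroup_generated G (component i ` set xs)"
  let ?Y = "\<lambda>i. subgroup_generated G (component i ` set ys)"
  have "\<exists>\<phi>. \<phi> \<in> iso (?X i) (?Y i) \<and> map \<phi> (map (component i) xs) = map (component i) ys"
    if "i < n" for i
    using comps[OF that] by (elim defines_isoE) auto
  then obtain \<phi> where \<phi>_iso: "\<And>i. i < n \<Longrightarrow> \<phi> i \<in> iso (?X i) (?Y i)"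
    and \<phi>_map: "\<And>i. i < n \<Longrightarrow> map (\<phi> i) (map (component i) xs) = map (component i) ys"
    by metis
  have gen_carrier: "generate G (set xs) \<subseteq> carrier G" using xs by (rule generate_incl)
  have \<phi>_hom: "\<phi> i \<in> hom (?X i) G" if i: "i < n" for i
    using \<phi>_iso[OF i] by (simp add: iso_def hom_into_subgroup_eq_gen)
  have carrier_X: "carrier (?X i) = component i ` generate G (set xs)" if i: "i < n" for i
    using xs component_closed[OF i] component_generate[OF i xs]
    by (subst subgroup_generated_eq_carrier_update) auto
  have \<phi>_into: "\<phi> i ` component i ` generate G (set xs) \<subseteq> Gs i" if i: "i < n" for i
  proof -
    have "\<phi> i ` carrier (?X i) \<subseteq> carrier (?Y i)"
      using \<phi>_iso[OF i] by (auto simp: iso_def hom_def)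
    also have "\<dots> \<subseteq> Gs i"
      using subgroup_generated_minimal[OF subgroup_factor[OF i]] component_in_factor[OF i] ys by blast
    finally show ?thesis using carrier_X[OF i] by simp
  qed
  have "componentwise \<phi> \<in> hom (subgroup_generated G (set xs)) G"
    using xs \<phi>_hom \<phi>_into by (rule hom_componentwise)
  moreover have "inj_on (componentwise \<phi>) (generate G (set xs))"
  proof (rule inj_on_componentwise[OF gen_carrier _ \<phi>_into])
    show "inj_on (\<phi> i) (component i ` generate G (set xs))" if i: "i < n" for i
      using \<phi>_iso[OF i] carrier_X[OF i] by (simp add: iso_def bij_betw_def)
  qed
  moreover have "map (componentwise \<phi>) xs = ys"
  proof (rule map_componentwise[OF len ys _ \<phi>_map])
    show "\<phi> i ` component i ` set xs \<subseteq> Gs i" if i: "i < n" for i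
      using \<phi>_into[OF i] generate.incl[of _ "set xs" G] by blast
  qed
  ultimately show ?thesis
    using xs len by (intro defines_iso_by_injective_hom)
qed

end

locale coprime_direct_decomposition = direct_decomposition +
  assumes finite_carrier: "finite (carrier G)"
    and coprime_orders: "\<And>i j. i < n \<Longrightarrow> j < n \<Longrightarrow> i \<noteq> j \<Longrightarrow> coprime (card (Gs i)) (card (Gs j))"
begin

lemma finite_factor: "i < n \<Longrightarrow> finite (Gs i)"
  using finite_carrier subgroup.subset[OF subgroup_factor] finite_subset by blast

lemma component_eq_pow: "i < n \<Longrightarrow> \<exists>e::nat. \<forall>g \<in> carrier G. component i g = g [^] e"
proof -
  assume i: "i < n"
  obtain e :: nat where e: "\<And>j. j < n \<Longrightarrow> [e = (if j = i then 1 else 0)] (mod card (Gs j))"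
    using chinese_remainder_nat[of "{..<n}" "\<lambda>j. card (Gs j)" "\<lambda>j. if j = i then 1 else 0"]
      coprime_orders by auto
  have "component i g = g [^] e" if g: "g \<in> carrier G" for g
  proof (rule components_eqI)
    fix j assume j: "j < n"
    have "component j (g [^] e) = component j g [^] e"
      using group_hom.hom_nat_pow[OF component_hom[OF j] g] by simp
    also have "\<dots> = component j g [^] (if j = i then 1 else 0 :: nat)"
      using pow_cong_card_subgroup[OF subgroup_factor[OF j] finite_factor[OF j]
          component_in_factor[OF j g] e[OF j]] .
    also have "\<dots> = component j (component i g)"
      using component_factor[OF i j component_in_factor[OF i g]] component_closed[OF j g] by auto
    finally show "component j (component i g) = component j (g [^] e)" ..
  qed (use g component_closed[OF i g] in auto)
  then show ?thesis by blast
qed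

lemma defines_iso_map_component:
  assumes xs: "set xs \<subseteq> carrier G" and ys: "set ys \<subseteq> carrier G" and D: "defines_iso G xs ys"
    and i: "i < n"
  shows "defines_iso G (map (component i) xs) (map (component i) ys)"
proof -
  obtain e :: nat where e: "\<forall>g \<in> carrier G. component i g = g [^] e"
    using component_eq_pow[OF i] ..
  have "map (component i) zs = map (\<lambda>x. x [^] e) zs" if "set zs \<subseteq> carrier G" for zs
    using e that by (auto intro: map_cong)
  then show ?thesis using defines_iso_map_pow[OF xs ys D, of e] xs ys by metis
qed

lemma defines_iso_nth_in_factor:
  assumes i: "i < n" and xs: "set xs \<subseteq> carrier G" and ys: "set ys \<subseteq> carrier G"
    and D: "defines_iso G xs ys" and k: "k < length xs" and xk: "xs ! k \<in> Gs i"
  shows "ys ! k \<in> Gs i"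
proof -
  obtain e :: nat where e: "\<forall>g \<in> carrier G. component i g = g [^] e"
    using component_eq_pow[OF i] ..
  have "xs ! k \<in> carrier G" using xs k nth_mem by blast
  then have "xs ! k [^] e = xs ! k"
    using e component_factor[OF i i xk] by auto
  then have "ys ! k [^] e = ys ! k"
    using defines_iso_nth_pow_fixed[OF xs D k] by simp
  moreover have "ys ! k \<in> carrier G"
    using D ys k by (auto simp: defines_iso_def)
  ultimately show ?thesis using e component_in_factor[OF i] by metis
qed

lemma tuple_regular_factor:
  assumes regular: "tuple_regular G l" and i: "i < n"
  shows "tuple_regular (G\<lparr>carrier := Gs i\<rparr>) l"
  unfolding tuple_regular_subgroup_iff[OF subgroup_factor[OF i]]
proof (intro allI impI, elim conjE)
  fix xs ys
  assume lx: "length xs = l" and ly: "length ys = l"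
    and xs: "set xs \<subseteq> Gs i" and ys: "set ys \<subseteq> Gs i" and D: "defines_iso G xs ys"
  have factor_carrier: "Gs i \<subseteq> carrier G" using subgroup.subset[OF subgroup_factor[OF i]] .
  then have xsG: "set xs \<subseteq> carrier G" and ysG: "set ys \<subseteq> carrier G"
    using xs ys by auto
  obtain \<Psi> where bij: "bij_betw \<Psi> (carrier G) (carrier G)"
    and ext: "\<forall>g \<in> carrier G. defines_iso G (xs @ [g]) (ys @ [\<Psi> g])"
    using regular lx ly xsG ysG D unfolding tuple_regular_def by blast
  have into: "\<Psi> g \<in> Gs i" if g: "g \<in> Gs i" for g
  proof -
    have "g \<in> carrier G" "\<Psi> g \<in> carrier G" using g factor_carrier bij_betw_apply[OF bij] by auto
    then show ?thesis
      using defines_iso_nth_in_factor[OF i _ _ bspec[OF ext], of g "length xs"] xsG ysG g lx ly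
      by (simp add: nth_append)
  qed
  have "inj_on \<Psi> (Gs i)"
    using bij factor_carrier by (auto simp: bij_betw_def intro: inj_on_subset)
  moreover have "\<Psi> ` Gs i = Gs i"
    using finite_factor[OF i] into \<open>inj_on \<Psi> (Gs i)\<close> by (intro endo_inj_surj) auto
  ultimately show "\<exists>\<Psi>. bij_betw \<Psi> (Gs i) (Gs i) \<and> (\<forall>g \<in> Gs i. defines_iso G (xs @ [g]) (ys @ [\<Psi> g]))"
    using ext factor_carrier by (auto simp: bij_betw_def)
qed

lemma tuple_regular_of_factors:
  assumes regular: "\<And>i. i < n \<Longrightarrow> tuple_regular (G\<lparr>carrier := Gs i\<rparr>) l"
  shows "tuple_regular G l"
  unfolding tuple_regular_def
proof (intro allI impI, elim conjE)
  fix xs ys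
  assume lx: "length xs = l" and ly: "length ys = l"
    and xs: "set xs \<subseteq> carrier G" and ys: "set ys \<subseteq> carrier G" and D: "defines_iso G xs ys"
  have "\<exists>\<Psi>. bij_betw \<Psi> (Gs i) (Gs i) \<and>
      (\<forall>g \<in> Gs i. defines_iso G (map (component i) xs @ [g]) (map (component i) ys @ [\<Psi> g]))"
    if i: "i < n" for i
  proof -
    have "set (map (component i) xs) \<subseteq> Gs i" "set (map (component i) ys) \<subseteq> Gs i"
      using xs ys component_in_factor[OF i] by auto
    then show ?thesis
      using regular[OF i, unfolded tuple_regular_subgroup_iff[OF subgroup_factor[OF i]], rule_format,
          of "map (component i) xs" "map (component i) ys"]
        defines_iso_map_component[OF xs ys D i] lx ly
      by simp
  qed
  then obtain \<Psi> where \<Psi>_bij: "\<And>i. i < n \<Longrightarrow> bij_betw (\<Psi> i) (Gs i) (Gs i)"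
    and \<Psi>_ext: "\<And>i g. i < n \<Longrightarrow> g \<in> Gs i \<Longrightarrow>
      defines_iso G (map (component i) xs @ [g]) (map (component i) ys @ [\<Psi> i g])"
    by metis
  have into: "\<And>i. i < n \<Longrightarrow> \<Psi> i (component i g) \<in> Gs i" if "g \<in> carrier G" for g
    using \<Psi>_bij component_in_factor that by (blast intro: bij_betw_apply)
  have "inj_on (componentwise \<Psi>) (carrier G)"
    using \<Psi>_bij into by (intro inj_on_componentwise) (auto simp: component_image bij_betw_def)
  moreover have "componentwise \<Psi> ` carrier G \<subseteq> carrier G"
    using into componentwise_closed by blast
  ultimately have "bij_betw (componentwise \<Psi>) (carrier G) (carrier G)"
    using finite_carrier by (simp add: bij_betw_def endo_inj_surj)
  moreover have "defines_iso G (xs @ [g]) (ys @ [componentwise \<Psi> g])" if g: "g \<in> carrier G" for g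
  proof (rule defines_iso_of_components)
    fix i assume i: "i < n"
    show "defines_iso G (map (component i) (xs @ [g])) (map (component i) (ys @ [componentwise \<Psi> g]))"
      using \<Psi>_ext[OF i component_in_factor[OF i g]] component_componentwise[of \<Psi> g, OF into[OF g] i] by simp
  qed (use xs ys g lx ly into[OF g] componentwise_closed in auto)
  ultimately show "\<exists>\<Psi>. bij_betw \<Psi> (carrier G) (carrier G) \<and>
      (\<forall>g \<in> carrier G. defines_iso G (xs @ [g]) (ys @ [\<Psi> g]))"
    by blast
qed

end

theorem corollary3p3:
  fixes G :: "('a, 'b) monoid_scheme" and n :: nat and Gs :: "nat \<Rightarrow> 'a set" and l :: nat
  assumes "group G"
    and "finite (carrier G)"
    and "internal_direct_product G n Gs"
    and "\<And>i j. i < n \<Longrightarrow> j < n \<Longrightarrow> i \<noteq> j \<Longrightarrow> coprime (card (Gs i)) (card (Gs j))"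
  shows "tuple_regular G l \<longleftrightarrow> (\<forall>i < n. tuple_regular (G\<lparr>carrier := Gs i\<rparr>) l)"
proof -
  interpret coprime_direct_decomposition G n Gs
    using assms by (simp add: coprime_direct_decomposition_def coprime_direct_decomposition_axioms_def
        direct_decomposition_def direct_decomposition_axioms_def)
  show ?thesis using tuple_regular_factor tuple_regular_of_factors by blast
qed

end
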